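(* Let $\mathscr C$ be a concept class on a set $\Omega$ and $d\in\mathbb N$. The following are equivalent: (1) $\mathrm{VC}(\mathscr C\,\mathrm{mod}\,\omega_1)\le d$; (2) for every countable subclass $\mathscr C'\subseteq\mathscr C$ there exists a countable set $N\subseteq\Omega$ such that $\mathrm{VC}(\mathscr C'\restriction(\Omega\setminus N))\le d$.
   Context: $\mathrm{VC}(\mathscr C\restriction X)$ is the VC dimension of $\{C\cap X:C\in\mathscr C\}$. $\mathrm{VC}(\mathscr C\,\mathrm{mod}\,\omega_1)$ is the supremum of $n$ for which there exist uncountable sets $A_1,\dots,A_n\subseteq\Omega$ such that for every $J\subseteq\{1,\dots,n\}$ some $C\in\mathscr C$ contains $A_i$ for all $i\in J$ and is disjoint from $A_j$ for all $j\notin J$. *)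

theory Defs
  imports Main "HOL-Library.Countable_Set" "HOL-Library.Extended_Nat"
begin

definition shatters :: "'a set set \<Rightarrow> 'a set \<Rightarrow> bool" where
  "shatters F A \<longleftrightarrow> (\<forall>B\<subseteq>A. \<exists>C\<in>F. C \<inter> A = B)"

definition VC :: "'a set set \<Rightarrow> enat" where
  "VC F = Sup {enat (card A) | A. finite A \<and> shatters F A}"

definition restr :: "'a set set \<Rightarrow> 'a set \<Rightarrow> 'a set set" where
  "restr F X = {C \<inter> X | C. C \<in> F}"

definition VC_mod_omega1 :: "'a set \<Rightarrow> 'a set set \<Rightarrow> enat" where
  "VC_mod_omega1 \<Omega> F = Sup {enat n | n. \<exists>A :: nat \<Rightarrow> 'a set.
      (\<forall>i<n. A i \<subseteq> \<Omega> \<and> uncountable (A i)) \<and>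
      (\<forall>J\<subseteq>{..<n}. \<exists>C\<in>F. (\<forall>i\<in>J. A i \<subseteq> C) \<and> (\<forall>j\<in>{..<n} - J. A j \<inter> C = {}))}"

end

theory Submission
  imports Defs
begin

(* Proof idea.  Both directions compare shattering of finite point sets with
   "shattering modulo countable sets" of uncountable sets A_0, ..., A_{n-1}.

   (1) \<Longrightarrow> (2): for a countable subclass C' and a finite F \<subseteq> C', the atom of a
   point y is the set of points of \<Omega> lying in exactly the same members of F
   as y.  There are countably many finite F \<subseteq> C', each with finitely many
   atoms, so the union N of all countable atoms is countable.  A finite
   A \<subseteq> \<Omega> - N shattered by C' is shattered by a finite F \<subseteq> C', and the
   (uncountable) atoms of the points of A are mod-shattered by F.

   (2) \<Longrightarrow> (1): uncountable A_i mod-shattered by \<C> are mod-shattered by a finite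
   subclass C'; for the countable N given by (2) pick a_i \<in> A_i - N.  The A_i
   are pairwise disjoint, so the a_i are distinct, and the trace of C' on
   \<Omega> - N shatters {a_i}. *)

section \<open>Shattering modulo countable sets\<close>

definition mod_shatters :: "'a set set \<Rightarrow> nat \<Rightarrow> (nat \<Rightarrow> 'a set) \<Rightarrow> bool" where
  "mod_shatters F n A \<longleftrightarrow>
     (\<forall>J\<subseteq>{..<n}. \<exists>C\<in>F. (\<forall>i\<in>J. A i \<subseteq> C) \<and> (\<forall>j\<in>{..<n} - J. A j \<inter> C = {}))"

lemma mod_shattersD:
  "mod_shatters F n A \<Longrightarrow> J \<subseteq> {..<n} \<Longrightarrow>
     \<exists>C\<in>F. (\<forall>i\<in>J. A i \<subseteq> C) \<and> (\<forall>j\<in>{..<n} - J. A j \<inter> C = {})"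
  unfolding mod_shatters_def by blast

lemma VC_mod_omega1_le_iff:
  "VC_mod_omega1 \<Omega> F \<le> enat d \<longleftrightarrow>
     (\<forall>n A. (\<forall>i<n. A i \<subseteq> \<Omega> \<and> uncountable (A i)) \<and> mod_shatters F n A \<longrightarrow> n \<le> d)"
    (is "_ \<longleftrightarrow> (\<forall>n A. ?unc n A \<and> _ \<longrightarrow> _)")
proof -
  have "VC_mod_omega1 \<Omega> F = Sup {enat n | n. \<exists>A. ?unc n A \<and> mod_shatters F n A}"
    unfolding VC_mod_omega1_def mod_shatters_def ..
  also have "\<dots> \<le> enat d \<longleftrightarrow> (\<forall>n. (\<exists>A. ?unc n A \<and> mod_shatters F n A) \<longrightarrow> enat n \<le> enat d)"
    by (simp add: Sup_le_iff setcompr_eq_image)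
  finally show ?thesis by simp
qed

lemma VC_le_iff:
  "VC F \<le> enat d \<longleftrightarrow> (\<forall>A. finite A \<and> shatters F A \<longrightarrow> card A \<le> d)"
  unfolding VC_def by (simp add: Sup_le_iff setcompr_eq_image)

lemma length_le_of_VC_mod_omega1_le:
  "VC_mod_omega1 \<Omega> F \<le> enat d \<Longrightarrow> \<forall>i<n. A i \<subseteq> \<Omega> \<and> uncountable (A i) \<Longrightarrow>
     mod_shatters F n A \<Longrightarrow> n \<le> d"
  unfolding VC_mod_omega1_le_iff by blast

lemma card_le_of_VC_le: "VC F \<le> enat d \<Longrightarrow> finite A \<Longrightarrow> shatters F A \<Longrightarrow> card A \<le> d"
  unfolding VC_le_iff by blast

lemma finite_subfamily_witnesses:
  assumes "finite S" and "\<forall>x\<in>S. \<exists>C\<in>F. P x C"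
  obtains F' where "F' \<subseteq> F" "finite F'" "\<forall>x\<in>S. \<exists>C\<in>F'. P x C"
proof -
  have "\<forall>x\<in>S. \<exists>C. C \<in> F \<and> P x C" using assms(2) by blast
  from bchoice[OF this] obtain W where W: "\<forall>x\<in>S. W x \<in> F \<and> P x (W x)" by blast
  have "\<forall>x\<in>S. W x \<in> W ` S \<and> P x (W x)" using W by simp
  then have "\<forall>x\<in>S. \<exists>C\<in>W ` S. P x C" by blast
  moreover have "W ` S \<subseteq> F" using W by blast
  moreover have "finite (W ` S)" using assms(1) by simp
  ultimately show ?thesis using that by blast
qed

text \<open>Pairwise disjointness: the pattern {i} separates A i from every other A j.\<close>
lemma mod_shatters_disjoint:
  assumes "mod_shatters F n A" "i < n" "j < n" "i \<noteq> j"
  shows "A i \<inter> A j = {}"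
proof -
  have "{i} \<subseteq> {..<n}" using assms(2) by simp
  from mod_shattersD[OF assms(1) this]
  obtain C where C: "\<forall>i'\<in>{i}. A i' \<subseteq> C" "\<forall>j'\<in>{..<n} - {i}. A j' \<inter> C = {}"
    by blast
  have "A i \<subseteq> C" using C(1) by simp
  moreover have "A j \<inter> C = {}" using C(2) assms(3,4) by simp
  ultimately show ?thesis by blast
qed

text \<open>There are only finitely many patterns, so a finite subclass already mod-shatters.\<close>
lemma mod_shatters_finite_subclass:
  assumes "mod_shatters F n A"
  obtains F' where "F' \<subseteq> F" "finite F'" "mod_shatters F' n A"
proof -
  have "finite (Pow {..<n})" by simp
  moreover have "\<forall>J\<in>Pow {..<n}. \<exists>C\<in>F. (\<forall>i\<in>J. A i \<subseteq> C) \<and> (\<forall>j\<in>{..<n} - J. A j \<inter> C = {})"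
    using assms by (simp add: mod_shatters_def)
  ultimately obtain F' where F': "F' \<subseteq> F" "finite F'"
    and "\<forall>J\<in>Pow {..<n}. \<exists>C\<in>F'. (\<forall>i\<in>J. A i \<subseteq> C) \<and> (\<forall>j\<in>{..<n} - J. A j \<inter> C = {})"
    by (rule finite_subfamily_witnesses)
  then have "mod_shatters F' n A" by (simp add: mod_shatters_def)
  with F' show ?thesis by (rule that)
qed

lemma mod_shatters_transversal:
  assumes sh: "mod_shatters F n A" and a: "\<And>i. i < n \<Longrightarrow> a i \<in> A i"
  shows "shatters F (a ` {..<n})" "card (a ` {..<n}) = n"
proof -
  have "inj_on a {..<n}"
  proof (rule inj_onI)
    fix i j assume ij: "i \<in> {..<n}" "j \<in> {..<n}" "a i = a j"
    show "i = j"
    proof (rule ccontr)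
      assume "i \<noteq> j"
      then have "A i \<inter> A j = {}" using mod_shatters_disjoint[OF sh] ij by simp
      then show False using a ij by (metis disjoint_iff lessThan_iff)
    qed
  qed
  then show "card (a ` {..<n}) = n" by (simp add: card_image)
  show "shatters F (a ` {..<n})"
    unfolding shatters_def
  proof (intro allI impI)
    fix B assume B: "B \<subseteq> a ` {..<n}"
    define J where "J = {i\<in>{..<n}. a i \<in> B}"
    have "J \<subseteq> {..<n}" unfolding J_def by blast
    from mod_shattersD[OF sh this]
    obtain C where C: "C \<in> F" "\<forall>i\<in>J. A i \<subseteq> C" "\<forall>j\<in>{..<n} - J. A j \<inter> C = {}"
      by blast
    have "C \<inter> a ` {..<n} \<subseteq> B"
    proof
      fix y assume "y \<in> C \<inter> a ` {..<n}"
      then obtain i where i: "i < n" "y = a i" "a i \<in> C" by blast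
      then have "i \<notin> {..<n} - J" using C(3) a[OF i(1)] by blast
      then show "y \<in> B" using i unfolding J_def by simp
    qed
    moreover have "B \<subseteq> C \<inter> a ` {..<n}"
    proof
      fix y assume "y \<in> B"
      then obtain i where i: "i < n" "y = a i" "i \<in> J" using B unfolding J_def by blast
      then show "y \<in> C \<inter> a ` {..<n}" using C(2) a[OF i(1)] by blast
    qed
    ultimately show "\<exists>C\<in>F. C \<inter> a ` {..<n} = B" using C(1) by blast
  qed
qed

lemma shattersD: "shatters F A \<Longrightarrow> B \<subseteq> A \<Longrightarrow> \<exists>C\<in>F. C \<inter> A = B"
  unfolding shatters_def by blast

lemma shatters_restr_iff:
  "shatters (restr F X) A \<longleftrightarrow> A \<subseteq> X \<and> shatters F A"
proof
  assume sh: "shatters (restr F X) A"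
  have traced: "\<exists>C\<in>F. C \<inter> X \<inter> A = B" if "B \<subseteq> A" for B
  proof -
    obtain D where "D \<in> restr F X" "D \<inter> A = B" using shattersD[OF sh \<open>B \<subseteq> A\<close>] by blast
    then show ?thesis unfolding restr_def by blast
  qed
  from traced[OF subset_refl] have AX: "A \<subseteq> X" by blast
  have "\<exists>C\<in>F. C \<inter> A = B" if "B \<subseteq> A" for B
  proof -
    obtain C where "C \<in> F" "C \<inter> X \<inter> A = B" using traced[OF \<open>B \<subseteq> A\<close>] by blast
    moreover have "C \<inter> X \<inter> A = C \<inter> A" using AX by blast
    ultimately show ?thesis by auto
  qed
  with AX show "A \<subseteq> X \<and> shatters F A" unfolding shatters_def by blast
next
  assume AX: "A \<subseteq> X \<and> shatters F A"
  have "\<exists>D\<in>restr F X. D \<inter> A = B" if "B \<subseteq> A" for B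
  proof -
    obtain C where C: "C \<in> F" "C \<inter> A = B" using shattersD[OF _ \<open>B \<subseteq> A\<close>] AX by blast
    have "C \<inter> X \<in> restr F X" using C(1) unfolding restr_def by blast
    moreover have "C \<inter> X \<inter> A = B" using C(2) AX by blast
    ultimately show ?thesis by blast
  qed
  then show "shatters (restr F X) A" unfolding shatters_def by blast
qed

text \<open>A finite set has finitely many subsets, so a finite subclass already shatters it.\<close>
lemma shatters_finite_subclass:
  assumes "finite A" "shatters F A"
  obtains F' where "F' \<subseteq> F" "finite F'" "shatters F' A"
proof -
  have "finite (Pow A)" using assms(1) by simp
  moreover have "\<forall>B\<in>Pow A. \<exists>C\<in>F. C \<inter> A = B" using assms(2) by (simp add: shatters_def)
  ultimately obtain F' where F': "F' \<subseteq> F" "finite F'" and "\<forall>B\<in>Pow A. \<exists>C\<in>F'. C \<inter> A = B"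
    by (rule finite_subfamily_witnesses)
  then have "shatters F' A" by (simp add: shatters_def)
  with F' show ?thesis by (rule that)
qed

section \<open>Atoms of a subclass\<close>

definition atom :: "'a set \<Rightarrow> 'a set set \<Rightarrow> 'a \<Rightarrow> 'a set" where
  "atom \<Omega> F y = {z\<in>\<Omega>. \<forall>C\<in>F. z \<in> C \<longleftrightarrow> y \<in> C}"

lemma atom_self: "y \<in> \<Omega> \<Longrightarrow> y \<in> atom \<Omega> F y"
  and atom_subset: "atom \<Omega> F y \<subseteq> \<Omega>"
  unfolding atom_def by auto

lemma atom_subset_member: "C \<in> F \<Longrightarrow> y \<in> C \<Longrightarrow> atom \<Omega> F y \<subseteq> C"
  and atom_disjoint_member: "C \<in> F \<Longrightarrow> y \<notin> C \<Longrightarrow> atom \<Omega> F y \<inter> C = {}"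
  unfolding atom_def by auto

text \<open>An atom is determined by the subfamily of F containing its point,
  so a finite F has only finitely many atoms.\<close>
lemma finite_atoms:
  assumes "finite F"
  shows "finite (range (atom \<Omega> F))"
proof -
  define cell where "cell G = {z\<in>\<Omega>. \<forall>C\<in>F. z \<in> C \<longleftrightarrow> C \<in> G}" for G
  have "atom \<Omega> F y = cell {C\<in>F. y \<in> C}" for y
    unfolding atom_def cell_def by auto
  then have "range (atom \<Omega> F) \<subseteq> cell ` Pow F" by blast
  then show ?thesis using assms by (simp add: finite_subset)
qed

text \<open>The exceptional set for a countable class: points lying in a countable atom
  of some finite subclass.  It is a countable union of finite unions of countable sets.\<close>
lemma countable_small_atoms:
  assumes "countable \<C>'"
  shows "countable {y\<in>\<Omega>. \<exists>F. finite F \<and> F \<subseteq> \<C>' \<and> countable (atom \<Omega> F y)}"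
proof -
  let ?S = "{F. finite F \<and> F \<subseteq> \<C>'}"
  let ?small = "\<lambda>F. \<Union>X\<in>{X \<in> range (atom \<Omega> F). countable X}. X"
  have "y \<in> (\<Union>F\<in>?S. ?small F)"
    if "y \<in> \<Omega>" "finite F" "F \<subseteq> \<C>'" "countable (atom \<Omega> F y)" for y F
  proof -
    have "y \<in> ?small F" using that(1,4) atom_self[of y \<Omega> F] by blast
    then show ?thesis using that(2,3) by blast
  qed
  then have "{y\<in>\<Omega>. \<exists>F. finite F \<and> F \<subseteq> \<C>' \<and> countable (atom \<Omega> F y)} \<subseteq> (\<Union>F\<in>?S. ?small F)"
    by blast
  moreover have "countable (\<Union>F\<in>?S. ?small F)"
  proof (rule countable_UN)
    show "countable ?S" using countable_Collect_finite_subset[OF assms] by simp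
    fix F assume "F \<in> ?S"
    then have "finite (range (atom \<Omega> F))" by (intro finite_atoms) simp
    then have "finite {X \<in> range (atom \<Omega> F). countable X}" by simp
    then have "countable {X \<in> range (atom \<Omega> F). countable X}" by (rule countable_finite)
    then show "countable (?small F)" by (rule countable_UN) simp
  qed
  ultimately show ?thesis using countable_subset by blast
qed

text \<open>If F \<subseteq> \<C> shatters a finite A \<subseteq> \<Omega> whose points all have uncountable atoms,
  these atoms form an uncountable family of size card A mod-shattered by \<C>.\<close>
lemma card_le_VC_mod_omega1_via_atoms:
  assumes "F \<subseteq> \<C>" "finite A" "A \<subseteq> \<Omega>" "shatters F A"
    and unc: "\<And>a. a \<in> A \<Longrightarrow> uncountable (atom \<Omega> F a)"
    and bound: "VC_mod_omega1 \<Omega> \<C> \<le> enat d"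
  shows "card A \<le> d"
proof -
  obtain x where x: "bij_betw x {..<card A} A"
    using ex_bij_betw_nat_finite[OF assms(2)] by (auto simp: atLeast0LessThan)
  then have xA: "x i \<in> A" if "i < card A" for i using that by (auto dest: bij_betw_apply)
  have shatter_atoms: "mod_shatters \<C> (card A) (\<lambda>i. atom \<Omega> F (x i))"
    unfolding mod_shatters_def
  proof (intro allI impI)
    fix J assume J: "J \<subseteq> {..<card A}"
    then have "x ` J \<subseteq> A" using xA by blast
    from shattersD[OF assms(4) this] obtain C where C: "C \<in> F" "C \<inter> A = x ` J"
      by blast
    have sub: "atom \<Omega> F (x i) \<subseteq> C" if "i \<in> J" for i
      using that C(2) by (intro atom_subset_member[OF C(1)]) blast
    have disj: "atom \<Omega> F (x j) \<inter> C = {}" if j: "j \<in> {..<card A} - J" for j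
    proof (rule atom_disjoint_member[OF C(1)])
      have "inj_on x {..<card A}" using x by (rule bij_betw_imp_inj_on)
      then have "x j \<notin> x ` J" using j J by (simp add: inj_on_image_mem_iff)
      then show "x j \<notin> C" using C(2) xA j by blast
    qed
    have "C \<in> \<C>" using C(1) assms(1) by blast
    then show "\<exists>C\<in>\<C>. (\<forall>i\<in>J. atom \<Omega> F (x i) \<subseteq> C) \<and>
                          (\<forall>j\<in>{..<card A} - J. atom \<Omega> F (x j) \<inter> C = {})"
      using sub disj by (intro bexI[of _ C] conjI ballI)
  qed
  have uncountable_atoms: "\<forall>i<card A. atom \<Omega> F (x i) \<subseteq> \<Omega> \<and> uncountable (atom \<Omega> F (x i))"
  proof (intro allI impI conjI)
    fix i assume "i < card A"
    show "atom \<Omega> F (x i) \<subseteq> \<Omega>" by (rule atom_subset)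
    show "uncountable (atom \<Omega> F (x i))" using \<open>i < card A\<close> by (intro unc xA)
  qed
  from length_le_of_VC_mod_omega1_le[OF bound uncountable_atoms shatter_atoms]
  show ?thesis .
qed

text \<open>(1) \<Longrightarrow> (2): remove the points lying in countable atoms.\<close>
lemma VC_restr_bound_of_VC_mod_omega1:
  assumes bound: "VC_mod_omega1 \<Omega> \<C> \<le> enat d" and "\<C>' \<subseteq> \<C>" "countable \<C>'"
  shows "\<exists>N. N \<subseteq> \<Omega> \<and> countable N \<and> VC (restr \<C>' (\<Omega> - N)) \<le> enat d"
proof (intro exI conjI)
  define N where "N = {y\<in>\<Omega>. \<exists>F. finite F \<and> F \<subseteq> \<C>' \<and> countable (atom \<Omega> F y)}"
  show "N \<subseteq> \<Omega>" "countable N"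
    unfolding N_def using countable_small_atoms[OF assms(3)] by auto
  show "VC (restr \<C>' (\<Omega> - N)) \<le> enat d"
    unfolding VC_le_iff
  proof (intro allI impI)
    fix A assume "finite A \<and> shatters (restr \<C>' (\<Omega> - N)) A"
    then have A: "finite A" "A \<subseteq> \<Omega> - N" "shatters \<C>' A"
      by (auto simp: shatters_restr_iff)
    obtain F where F: "F \<subseteq> \<C>'" "finite F" "shatters F A"
      using shatters_finite_subclass[OF A(1,3)] .
    have "uncountable (atom \<Omega> F a)" if "a \<in> A" for a
      using that A(2) F(1,2) unfolding N_def by blast
    moreover have "F \<subseteq> \<C>" "A \<subseteq> \<Omega>" using F(1) A(2) assms(2) by auto
    ultimately show "card A \<le> d"
      using card_le_VC_mod_omega1_via_atoms[OF _ A(1) _ F(3) _ bound] by blast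
  qed
qed

text \<open>(2) \<Longrightarrow> (1): a transversal of a mod-shattered family avoiding N is shattered.\<close>
lemma VC_mod_omega1_bound_of_VC_restr:
  assumes H: "\<forall>\<C>'. \<C>' \<subseteq> \<C> \<and> countable \<C>' \<longrightarrow>
                (\<exists>N. N \<subseteq> \<Omega> \<and> countable N \<and> VC (restr \<C>' (\<Omega> - N)) \<le> enat d)"
  shows "VC_mod_omega1 \<Omega> \<C> \<le> enat d"
  unfolding VC_mod_omega1_le_iff
proof (intro allI impI)
  fix n A assume "(\<forall>i<n. A i \<subseteq> \<Omega> \<and> uncountable (A i)) \<and> mod_shatters \<C> n A"
  then have U: "\<And>i. i < n \<Longrightarrow> A i \<subseteq> \<Omega> \<and> uncountable (A i)" and sh: "mod_shatters \<C> n A"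
    by auto
  obtain \<C>' where sub: "\<C>' \<subseteq> \<C>" and "finite \<C>'" and sh': "mod_shatters \<C>' n A"
    using mod_shatters_finite_subclass[OF sh] .
  then have "countable \<C>'" by (simp add: countable_finite)
  with H sub obtain N where N: "countable N" "VC (restr \<C>' (\<Omega> - N)) \<le> enat d"
    by (auto dest: spec[of _ \<C>'])
  have "\<forall>i\<in>{..<n}. \<exists>y. y \<in> A i - N"
  proof
    fix i assume "i \<in> {..<n}"
    then have "uncountable (A i)" using U by simp
    then have "\<not> A i \<subseteq> N" using N(1) countable_subset[of "A i" N] by blast
    then show "\<exists>y. y \<in> A i - N" by blast
  qed
  from bchoice[OF this] obtain a where a: "\<forall>i\<in>{..<n}. a i \<in> A i - N" by blast
  have "shatters \<C>' (a ` {..<n})" and card: "card (a ` {..<n}) = n"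
    using mod_shatters_transversal[OF sh'] a by auto
  moreover have "a ` {..<n} \<subseteq> \<Omega> - N" using a U by blast
  ultimately have "shatters (restr \<C>' (\<Omega> - N)) (a ` {..<n})"
    by (simp add: shatters_restr_iff)
  with card_le_of_VC_le[OF N(2)] have "card (a ` {..<n}) \<le> d" by simp
  with card show "n \<le> d" by simp
qed

theorem mainTheorem17:
  fixes \<Omega> :: "'a set" and \<C> :: "'a set set" and d :: nat
  assumes "\<forall>C\<in>\<C>. C \<subseteq> \<Omega>"
  shows "VC_mod_omega1 \<Omega> \<C> \<le> enat d \<longleftrightarrow>
    (\<forall>\<C>'. \<C>' \<subseteq> \<C> \<and> countable \<C>' \<longrightarrow>
       (\<exists>N. N \<subseteq> \<Omega> \<and> countable N \<and> VC (restr \<C>' (\<Omega> - N)) \<le> enat d))"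
proof
  assume bound: "VC_mod_omega1 \<Omega> \<C> \<le> enat d"
  show "\<forall>\<C>'. \<C>' \<subseteq> \<C> \<and> countable \<C>' \<longrightarrow>
          (\<exists>N. N \<subseteq> \<Omega> \<and> countable N \<and> VC (restr \<C>' (\<Omega> - N)) \<le> enat d)"
  proof (intro allI impI)
    fix \<C>' assume "\<C>' \<subseteq> \<C> \<and> countable \<C>'"
    then show "\<exists>N. N \<subseteq> \<Omega> \<and> countable N \<and> VC (restr \<C>' (\<Omega> - N)) \<le> enat d"
      using VC_restr_bound_of_VC_mod_omega1[OF bound] by simp
  qed
next
  assume "\<forall>\<C>'. \<C>' \<subseteq> \<C> \<and> countable \<C>' \<longrightarrow>
            (\<exists>N. N \<subseteq> \<Omega> \<and> countable N \<and> VC (restr \<C>' (\<Omega> - N)) \<le> enat d)"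
  then show "VC_mod_omega1 \<Omega> \<C> \<le> enat d" by (rule VC_mod_omega1_bound_of_VC_restr)
qed

end
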